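(* Let $Z\in\{0,1\}$, $S(1),S(0)\in\{0,1\}$ and a covariate vector $\mathbf{X}$ be random variables with $Z\perp\!\!\!\perp\{S(1),S(0),\mathbf{X}\}$ and observed $S=S(Z)$. Assume Monotonicity, $S(1)\ge S(0)$ almost surely. Then for any function $h$ of the covariates (with finite moments), $$E\{w_{1,s\bar{s}}(\mathbf{X})h(\mathbf{X})\mid Z=1,S=1\} = E\{w_{0,s\bar{s}}(\mathbf{X})h(\mathbf{X})\mid Z=0,S=0\},$$ $$E\{h(\mathbf{X})\mid Z=1,S=0\} = E\{w_{0,\bar{s}\bar{s}}(\mathbf{X})h(\mathbf{X})\mid Z=0,S=0\},$$ $$E\{w_{1,ss}(\mathbf{X})h(\mathbf{X})\mid Z=1,S=1\} = E\{h(\mathbf{X})\mid Z=0,S=1\},$$ where $w_{1,s\bar{s}}(\mathbf{X}) = \frac{e_{s\bar{s}}(\mathbf{X})}{e_{s\bar{s}}(\mathbf{X})+e_{ss}(\mathbf{X})}\Big/\frac{\pi_{s\bar{s}}}{\pi_{s\bar{s}}+\pi_{ss}}$, $w_{0,s\bar{s}}(\mathbf{X}) = \frac{e_{s\bar{s}}(\mathbf{X})}{e_{s\bar{s}}(\mathbf{X})+e_{\bar{s}\bar{s}}(\mathbf{X})}\Big/\frac{\pi_{s\bar{s}}}{\pi_{s\bar{s}}+\pi_{\bar{s}\bar{s}}}$, $w_{0,\bar{s}\bar{s}}(\mathbf{X}) = \frac{e_{\bar{s}\bar{s}}(\mathbf{X})}{e_{s\bar{s}}(\mathbf{X})+e_{\bar{s}\bar{s}}(\mathbf{X})}\Big/\frac{\pi_{\bar{s}\bar{s}}}{\pi_{s\bar{s}}+\pi_{\bar{s}\bar{s}}}$,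 $w_{1,ss}(\mathbf{X}) = \frac{e_{ss}(\mathbf{X})}{e_{s\bar{s}}(\mathbf{X})+e_{ss}(\mathbf{X})}\Big/\frac{\pi_{ss}}{\pi_{s\bar{s}}+\pi_{ss}}$.
   Context: The principal stratum is $U=(S(1),S(0))$, whose values $(1,1),(1,0),(0,1),(0,0)$ are labelled $ss, s\bar{s}, \bar{s}s, \bar{s}\bar{s}$. Principal scores: $e_u(\mathbf{X}) = \Pr(U=u\mid \mathbf{X})$; proportions $\pi_u=\Pr(U=u)$. All conditioning events and denominators are assumed positive. *)

theory Defs
  imports "HOL-Probability.Probability"
begin

text \<open>Principal strata U = (S(1), S(0)) encoded as pairs of booleans:
  ss = (True,True), s-sbar = (True,False), sbar-s = (False,True), sbar-sbar = (False,False).\<close>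

abbreviation ss :: "bool \<times> bool" where "ss \<equiv> (True, True)"
abbreviation ssb :: "bool \<times> bool" where "ssb \<equiv> (True, False)"
abbreviation sbs :: "bool \<times> bool" where "sbs \<equiv> (False, True)"
abbreviation sbsb :: "bool \<times> bool" where "sbsb \<equiv> (False, False)"

definition cond_exp_event :: "'a measure \<Rightarrow> 'a set \<Rightarrow> ('a \<Rightarrow> real) \<Rightarrow> real" where
  "cond_exp_event M B f = (\<integral>\<omega>. indicator B \<omega> * f \<omega> \<partial>M) / measure M B"

text \<open>g is (a version of) the principal score e_u(x) = Pr(U = u | X = x):
  a measurable function of the covariates with Pr(U = u, X \<in> A) = E[1{X \<in> A} g(X)]
  for every measurable A.\<close>
definition principal_score ::
  "'a measure \<Rightarrow> 'b measure \<Rightarrow> ('a \<Rightarrow> 'b) \<Rightarrow> ('a \<Rightarrow> 'u) \<Rightarrow> 'u \<Rightarrow> ('b \<Rightarrow> real) \<Rightarrow> bool" where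
  "principal_score M N X U u g \<longleftrightarrow>
     g \<in> borel_measurable N \<and> integrable M (\<lambda>\<omega>. g (X \<omega>)) \<and>
     (\<forall>A\<in>sets N. measure M {\<omega>\<in>space M. U \<omega> = u \<and> X \<omega> \<in> A}
        = (\<integral>\<omega>. indicator (X -` A \<inter> space M) \<omega> * g (X \<omega>) \<partial>M))"

definition stratum_prop :: "'a measure \<Rightarrow> ('a \<Rightarrow> 'u) \<Rightarrow> 'u \<Rightarrow> real" where
  "stratum_prop M U u = measure M {\<omega>\<in>space M. U \<omega> = u}"

definition w1_ssb :: "(bool \<times> bool \<Rightarrow> 'b \<Rightarrow> real) \<Rightarrow> (bool \<times> bool \<Rightarrow> real) \<Rightarrow> 'b \<Rightarrow> real" where
  "w1_ssb e p x = (e ssb x / (e ssb x + e ss x)) / (p ssb / (p ssb + p ss))"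

definition w0_ssb :: "(bool \<times> bool \<Rightarrow> 'b \<Rightarrow> real) \<Rightarrow> (bool \<times> bool \<Rightarrow> real) \<Rightarrow> 'b \<Rightarrow> real" where
  "w0_ssb e p x = (e ssb x / (e ssb x + e sbsb x)) / (p ssb / (p ssb + p sbsb))"

definition w0_sbsb :: "(bool \<times> bool \<Rightarrow> 'b \<Rightarrow> real) \<Rightarrow> (bool \<times> bool \<Rightarrow> real) \<Rightarrow> 'b \<Rightarrow> real" where
  "w0_sbsb e p x = (e sbsb x / (e ssb x + e sbsb x)) / (p sbsb / (p ssb + p sbsb))"

definition w1_ss :: "(bool \<times> bool \<Rightarrow> 'b \<Rightarrow> real) \<Rightarrow> (bool \<times> bool \<Rightarrow> real) \<Rightarrow> 'b \<Rightarrow> real" where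
  "w1_ss e p x = (e ss x / (e ssb x + e ss x)) / (p ss / (p ssb + p ss))"

end

theory Submission
  imports Defs
begin

text \<open>Because Z is independent of (S(1), S(0), X), conditioning on an observed cell
  {Z = z, S = s} amounts to conditioning on the principal strata compatible with it;
  under monotonicity these are {ss, ssb} for (1,1), {sbsb} for (1,0), {ss} for (0,1)
  and {ssb, sbsb} for (0,0). The score of a union of strata is the sum of their scores,
  so E[g(X) | cell] = E[(sum of e_u(X)) g(X)] / (sum of pi_u), and each weight is exactly
  the ratio that turns this into E[e_u(X) h(X)] / pi_u for one stratum u shared by both sides.\<close>

text \<open>G(X) is a version of P(Ev | X).\<close>
definition event_density :: "'a measure \<Rightarrow> 'b measure \<Rightarrow> ('a \<Rightarrow> 'b) \<Rightarrow> 'a set \<Rightarrow> ('b \<Rightarrow> real) \<Rightarrow> bool" where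
  "event_density M N X Ev G \<longleftrightarrow>
     G \<in> borel_measurable N \<and> integrable M (\<lambda>\<omega>. G (X \<omega>)) \<and>
     (\<forall>A\<in>sets N. measure M {\<omega>\<in>space M. \<omega> \<in> Ev \<and> X \<omega> \<in> A}
        = (\<integral>\<omega>. indicator (X -` A \<inter> space M) \<omega> * G (X \<omega>) \<partial>M))"

lemma principal_score_eq_event_density:
  "principal_score M N X U u g = event_density M N X {\<omega>\<in>space M. U \<omega> = u} g"
proof -
  have "{\<omega>\<in>space M. \<omega> \<in> {\<omega>\<in>space M. U \<omega> = u} \<and> X \<omega> \<in> A} = {\<omega>\<in>space M. U \<omega> = u \<and> X \<omega> \<in> A}" for A
    by auto
  then show ?thesis unfolding principal_score_def event_density_def by simp
qed

lemma event_density_nonneg: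
  assumes X: "X \<in> measurable M N" and G: "event_density M N X Ev G"
  shows "AE \<omega> in M. 0 \<le> G (X \<omega>)"
proof -
  have Gm: "G \<in> borel_measurable N" and Gi: "integrable M (\<lambda>\<omega>. G (X \<omega>))"
    and sc: "\<And>A. A \<in> sets N \<Longrightarrow> measure M {\<omega>\<in>space M. \<omega> \<in> Ev \<and> X \<omega> \<in> A}
               = (\<integral>\<omega>. indicator (X -` A \<inter> space M) \<omega> * G (X \<omega>) \<partial>M)"
    using G unfolding event_density_def by auto
  define A0 where "A0 = {x\<in>space N. G x < 0}"
  have A0: "A0 \<in> sets N" unfolding A0_def using Gm by measurable
  define f where "f = (\<lambda>\<omega>. - (indicator (X -` A0 \<inter> space M) \<omega> * G (X \<omega>)))"
  have f_int: "integrable M f"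
    unfolding f_def using integrable_real_mult_indicator[OF measurable_sets[OF X A0] Gi]
    by (simp add: mult.commute)
  have f_nonneg: "AE \<omega> in M. 0 \<le> f \<omega>"
    by (rule AE_I2) (auto simp: f_def A0_def indicator_def)
  have "integral\<^sup>L M f = - measure M {\<omega>\<in>space M. \<omega> \<in> Ev \<and> X \<omega> \<in> A0}"
    using sc[OF A0] by (simp add: f_def)
  hence "integral\<^sup>L M f \<le> 0" by simp
  with integral_nonneg_AE[OF f_nonneg] have "AE \<omega> in M. f \<omega> = 0"
    using integral_nonneg_eq_0_iff_AE[OF f_int f_nonneg] by simp
  with AE_space show ?thesis
    by eventually_elim (use measurable_space[OF X] in \<open>auto simp: f_def A0_def indicator_def split: if_splits\<close>)
qed

lemma distr_restrict_eq_density: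
  assumes M: "finite_measure M" and Ev: "Ev \<in> sets M" and X: "X \<in> measurable M N"
    and G: "event_density M N X Ev G"
  shows "distr (density M (\<lambda>\<omega>. ennreal (indicator Ev \<omega>))) N X = density (distr M N X) G"
proof (rule measure_eqI)
  fix A assume "A \<in> sets (distr (density M (\<lambda>\<omega>. ennreal (indicator Ev \<omega>))) N X)"
  hence A: "A \<in> sets N" by simp
  have Gm: "G \<in> borel_measurable N" and Gi: "integrable M (\<lambda>\<omega>. G (X \<omega>))"
    and sc: "measure M {\<omega>\<in>space M. \<omega> \<in> Ev \<and> X \<omega> \<in> A}
               = (\<integral>\<omega>. indicator (X -` A \<inter> space M) \<omega> * G (X \<omega>) \<partial>M)"
    using G A unfolding event_density_def by auto
  have XA: "X -` A \<inter> space M \<in> sets M" using X A by (rule measurable_sets)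
  have X': "X \<in> measurable (density M (\<lambda>\<omega>. ennreal (indicator Ev \<omega>))) N"
    using X by (simp add: measurable_cong_sets[OF sets_density refl])
  have "emeasure (distr (density M (\<lambda>\<omega>. ennreal (indicator Ev \<omega>))) N X) A = emeasure M (Ev \<inter> (X -` A \<inter> space M))"
    using X' A by (simp add: emeasure_distr ennreal_indicator emeasure_restricted[OF Ev XA])
  also have "Ev \<inter> (X -` A \<inter> space M) = {\<omega>\<in>space M. \<omega> \<in> Ev \<and> X \<omega> \<in> A}" by auto
  also have "emeasure M \<dots> = ennreal (\<integral>\<omega>. indicator (X -` A \<inter> space M) \<omega> * G (X \<omega>) \<partial>M)"
    using sc M by (simp add: finite_measure.emeasure_eq_measure)
  also have "\<dots> = (\<integral>\<^sup>+\<omega>. ennreal (indicator (X -` A \<inter> space M) \<omega> * G (X \<omega>)) \<partial>M)"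
    using event_density_nonneg[OF X G] integrable_real_mult_indicator[OF XA Gi]
    by (intro nn_integral_eq_integral[symmetric]) (auto simp: mult.commute)
  also have "\<dots> = (\<integral>\<^sup>+\<omega>. ennreal (G (X \<omega>)) * indicator A (X \<omega>) \<partial>M)"
    by (rule nn_integral_cong) (auto simp: indicator_def)
  also have "\<dots> = emeasure (density (distr M N X) G) A"
    using X Gm A by (simp add: nn_integral_distr emeasure_density)
  finally show "emeasure (distr (density M (\<lambda>\<omega>. ennreal (indicator Ev \<omega>))) N X) A = emeasure (density (distr M N X) G) A" .
qed simp

lemma integral_indicator_eq_event_density:
  assumes M: "finite_measure M" and Ev: "Ev \<in> sets M" and X: "X \<in> measurable M N"
    and G: "event_density M N X Ev G" and g: "g \<in> borel_measurable N"
  shows "(\<integral>\<omega>. indicator Ev \<omega> * g (X \<omega>) \<partial>M) = (\<integral>\<omega>. G (X \<omega>) * g (X \<omega>) \<partial>M)"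
proof -
  have Gm: "G \<in> borel_measurable N" using G unfolding event_density_def by simp
  have X': "X \<in> measurable (density M (\<lambda>\<omega>. ennreal (indicator Ev \<omega>))) N"
    using X by (simp add: measurable_cong_sets[OF sets_density refl])
  have G_nonneg: "AE x in distr M N X. 0 \<le> G x"
    using event_density_nonneg[OF X G] X Gm by (subst AE_distr_iff) auto
  have "(\<integral>\<omega>. indicator Ev \<omega> * g (X \<omega>) \<partial>M) = (\<integral>\<omega>. g (X \<omega>) \<partial>density M (\<lambda>\<omega>. ennreal (indicator Ev \<omega>)))"
    using Ev X g by (subst integral_density) (auto intro: measurable_compose)
  also have "\<dots> = (\<integral>x. g x \<partial>distr (density M (\<lambda>\<omega>. ennreal (indicator Ev \<omega>))) N X)"
    using X' g by (simp add: integral_distr)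
  also have "\<dots> = (\<integral>x. G x * g x \<partial>distr M N X)"
    unfolding distr_restrict_eq_density[OF M Ev X G]
    using g Gm G_nonneg by (subst integral_density) auto
  also have "\<dots> = (\<integral>\<omega>. G (X \<omega>) * g (X \<omega>) \<partial>M)"
    using X g Gm by (simp add: integral_distr)
  finally show ?thesis .
qed

lemma event_density_Un:
  assumes M: "finite_measure M" and X: "X \<in> measurable M N"
    and D1: "D1 \<in> sets M" and D2: "D2 \<in> sets M" and disj: "D1 \<inter> D2 = {}"
    and G1: "event_density M N X D1 G1" and G2: "event_density M N X D2 G2"
  shows "event_density M N X (D1 \<union> D2) (\<lambda>x. G1 x + G2 x)"
  unfolding event_density_def
proof (intro conjI ballI)
  show "(\<lambda>x. G1 x + G2 x) \<in> borel_measurable N" "integrable M (\<lambda>\<omega>. G1 (X \<omega>) + G2 (X \<omega>))"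
    using G1 G2 unfolding event_density_def by auto
  fix A assume A: "A \<in> sets N"
  have XA: "X -` A \<inter> space M \<in> sets M" using X A by (rule measurable_sets)
  have "{\<omega>\<in>space M. \<omega> \<in> D1 \<union> D2 \<and> X \<omega> \<in> A}
      = {\<omega>\<in>space M. \<omega> \<in> D1 \<and> X \<omega> \<in> A} \<union> {\<omega>\<in>space M. \<omega> \<in> D2 \<and> X \<omega> \<in> A}" by auto
  also have "measure M \<dots> = measure M {\<omega>\<in>space M. \<omega> \<in> D1 \<and> X \<omega> \<in> A}
                          + measure M {\<omega>\<in>space M. \<omega> \<in> D2 \<and> X \<omega> \<in> A}"
    using disj D1 D2 X A by (intro finite_measure.finite_measure_Union[OF M]) auto
  also have "\<dots> = (\<integral>\<omega>. indicator (X -` A \<inter> space M) \<omega> * G1 (X \<omega>) + indicator (X -` A \<inter> space M) \<omega> * G2 (X \<omega>) \<partial>M)"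
    using G1 G2 A integrable_real_mult_indicator[OF XA] unfolding event_density_def
    by (subst Bochner_Integration.integral_add) (auto simp: mult.commute)
  finally show "measure M {\<omega>\<in>space M. \<omega> \<in> D1 \<union> D2 \<and> X \<omega> \<in> A}
      = (\<integral>\<omega>. indicator (X -` A \<inter> space M) \<omega> * (G1 (X \<omega>) + G2 (X \<omega>)) \<partial>M)"
    by (simp add: distrib_left)
qed

lemma event_density_scale:
  assumes G: "event_density M N X D G"
    and scale: "\<And>A. A \<in> sets N \<Longrightarrow> measure M {\<omega>\<in>space M. \<omega> \<in> Ev \<and> X \<omega> \<in> A}
                  = c * measure M {\<omega>\<in>space M. \<omega> \<in> D \<and> X \<omega> \<in> A}"
  shows "event_density M N X Ev (\<lambda>x. c * G x)"
  using G unfolding event_density_def by (auto simp: scale mult.left_commute intro: borel_measurable_times)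

lemma cond_exp_event_scaled_density:
  assumes M: "finite_measure M" and X: "X \<in> measurable M N"
    and Ev: "Ev \<in> sets M" and D: "D \<in> sets M" and G: "event_density M N X D G"
    and scale: "\<And>A. A \<in> sets N \<Longrightarrow> measure M {\<omega>\<in>space M. \<omega> \<in> Ev \<and> X \<omega> \<in> A}
                  = c * measure M {\<omega>\<in>space M. \<omega> \<in> D \<and> X \<omega> \<in> A}"
    and pos: "measure M Ev > 0" and g: "g \<in> borel_measurable N"
  shows "cond_exp_event M Ev (\<lambda>\<omega>. g (X \<omega>)) = (\<integral>\<omega>. G (X \<omega>) * g (X \<omega>) \<partial>M) / measure M D"
proof -
  have "{\<omega>\<in>space M. \<omega> \<in> E \<and> X \<omega> \<in> space N} = E" if "E \<in> sets M" for E
    using that sets.sets_into_space measurable_space[OF X] by auto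
  with scale[of "space N"] Ev D have measure_Ev: "measure M Ev = c * measure M D" by simp
  with pos have "c \<noteq> 0" by auto
  have "cond_exp_event M Ev (\<lambda>\<omega>. g (X \<omega>)) = (\<integral>\<omega>. c * G (X \<omega>) * g (X \<omega>) \<partial>M) / measure M Ev"
    unfolding cond_exp_event_def
    using integral_indicator_eq_event_density[OF M Ev X event_density_scale[OF G scale] g] by simp
  also have "\<dots> = (\<integral>\<omega>. G (X \<omega>) * g (X \<omega>) \<partial>M) / measure M D"
    using \<open>c \<noteq> 0\<close> unfolding measure_Ev by (simp add: mult.assoc)
  finally show ?thesis .
qed

lemma integral_ratio_weight:
  fixes a s h :: "'a \<Rightarrow> real"
  assumes "a \<in> borel_measurable M" "s \<in> borel_measurable M" "h \<in> borel_measurable M"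
    and "AE \<omega> in M. s \<omega> \<noteq> 0" and "p \<noteq> 0" and "q \<noteq> 0"
  shows "(\<integral>\<omega>. s \<omega> * (a \<omega> / s \<omega> / (p / q) * h \<omega>) \<partial>M) / q = (\<integral>\<omega>. a \<omega> * h \<omega> \<partial>M) / p"
proof -
  have "(\<integral>\<omega>. s \<omega> * (a \<omega> / s \<omega> / (p / q) * h \<omega>) \<partial>M) = (\<integral>\<omega>. q / p * (a \<omega> * h \<omega>) \<partial>M)"
    using assms by (intro integral_cong_AE) auto
  with assms show ?thesis by simp
qed

locale principal_stratification = prob_space M for M :: "'a measure" +
  fixes N :: "'b measure" and Z S1 S0 :: "'a \<Rightarrow> bool" and X :: "'a \<Rightarrow> 'b"
    and e :: "bool \<times> bool \<Rightarrow> 'b \<Rightarrow> real"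
  assumes Z_measurable[measurable]: "Z \<in> measurable M (count_space UNIV)"
    and S1_measurable[measurable]: "S1 \<in> measurable M (count_space UNIV)"
    and S0_measurable[measurable]: "S0 \<in> measurable M (count_space UNIV)"
    and X_measurable[measurable]: "X \<in> measurable M N"
    and indep: "\<And>z B. B \<in> sets (count_space UNIV \<Otimes>\<^sub>M count_space UNIV \<Otimes>\<^sub>M N) \<Longrightarrow>
              measure M {\<omega>\<in>space M. Z \<omega> = z \<and> (S1 \<omega>, S0 \<omega>, X \<omega>) \<in> B}
              = measure M {\<omega>\<in>space M. Z \<omega> = z} * measure M {\<omega>\<in>space M. (S1 \<omega>, S0 \<omega>, X \<omega>) \<in> B}"
    and monotone: "AE \<omega> in M. S0 \<omega> \<longrightarrow> S1 \<omega>"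
    and scores: "\<And>u. principal_score M N X (\<lambda>\<omega>. (S1 \<omega>, S0 \<omega>)) u (e u)"
begin

abbreviation stratum :: "bool \<times> bool \<Rightarrow> 'a set" where
  "stratum u \<equiv> {\<omega>\<in>space M. (S1 \<omega>, S0 \<omega>) = u}"

abbreviation stratum_prob :: "bool \<times> bool \<Rightarrow> real" where
  "stratum_prob \<equiv> stratum_prop M (\<lambda>\<omega>. (S1 \<omega>, S0 \<omega>))"

lemma sets_stratum[measurable]: "stratum u \<in> sets M"
  by measurable

lemma measure_stratum: "measure M (stratum u) = stratum_prob u"
  by (simp add: stratum_prop_def)

lemma event_density_stratum: "event_density M N X (stratum u) (e u)"
  using scores by (simp add: principal_score_eq_event_density)

lemma score_measurable[measurable]: "e u \<in> borel_measurable N"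
  using event_density_stratum unfolding event_density_def by simp

lemma cond_exp_event_cell:
  fixes C :: "bool \<times> bool \<Rightarrow> bool"
  assumes D: "D \<in> sets M" and G: "event_density M N X D G"
    and C_D: "AE \<omega> in M. C (S1 \<omega>, S0 \<omega>) \<longleftrightarrow> \<omega> \<in> D"
    and pos: "measure M {\<omega>\<in>space M. Z \<omega> = z \<and> C (S1 \<omega>, S0 \<omega>)} > 0"
    and g: "g \<in> borel_measurable N"
  shows "cond_exp_event M {\<omega>\<in>space M. Z \<omega> = z \<and> C (S1 \<omega>, S0 \<omega>)} (\<lambda>\<omega>. g (X \<omega>))
           = (\<integral>\<omega>. G (X \<omega>) * g (X \<omega>) \<partial>M) / measure M D"
proof (rule cond_exp_event_scaled_density[OF finite_measure_axioms X_measurable _ D G _ pos g])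
  have [measurable]: "Measurable.pred (count_space UNIV \<Otimes>\<^sub>M count_space UNIV) C"
    by (simp add: pair_measure_countable)
  show "{\<omega>\<in>space M. Z \<omega> = z \<and> C (S1 \<omega>, S0 \<omega>)} \<in> sets M" by measurable
  fix A assume [measurable]: "A \<in> sets N"
  define B where "B = {w \<in> space (count_space UNIV \<Otimes>\<^sub>M count_space UNIV \<Otimes>\<^sub>M N).
                        C (fst w, fst (snd w)) \<and> snd (snd w) \<in> A}"
  have B[measurable]: "B \<in> sets (count_space UNIV \<Otimes>\<^sub>M count_space UNIV \<Otimes>\<^sub>M N)"
    unfolding B_def by measurable
  have X_B: "(S1 \<omega>, S0 \<omega>, X \<omega>) \<in> B \<longleftrightarrow> C (S1 \<omega>, S0 \<omega>) \<and> X \<omega> \<in> A" if "\<omega> \<in> space M" for \<omega>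
    using that measurable_space[OF X_measurable] by (auto simp: B_def space_pair_measure)
  have "measure M {\<omega>\<in>space M. \<omega> \<in> {\<omega>\<in>space M. Z \<omega> = z \<and> C (S1 \<omega>, S0 \<omega>)} \<and> X \<omega> \<in> A}
      = measure M {\<omega>\<in>space M. Z \<omega> = z \<and> (S1 \<omega>, S0 \<omega>, X \<omega>) \<in> B}"
    using X_B by (intro arg_cong[where f = "measure M"]) auto
  also have "\<dots> = measure M {\<omega>\<in>space M. Z \<omega> = z} * measure M {\<omega>\<in>space M. (S1 \<omega>, S0 \<omega>, X \<omega>) \<in> B}"
    by (rule indep[OF B])
  also have "measure M {\<omega>\<in>space M. (S1 \<omega>, S0 \<omega>, X \<omega>) \<in> B} = measure M {\<omega>\<in>space M. \<omega> \<in> D \<and> X \<omega> \<in> A}"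
  proof (rule measure_eq_AE)
    show "AE \<omega> in M. \<omega> \<in> {\<omega>\<in>space M. (S1 \<omega>, S0 \<omega>, X \<omega>) \<in> B}
                      \<longleftrightarrow> \<omega> \<in> {\<omega>\<in>space M. \<omega> \<in> D \<and> X \<omega> \<in> A}"
      using C_D by eventually_elim (auto simp: X_B)
  qed (use D in measurable)
  finally show "measure M {\<omega>\<in>space M. \<omega> \<in> {\<omega>\<in>space M. Z \<omega> = z \<and> C (S1 \<omega>, S0 \<omega>)} \<and> X \<omega> \<in> A}
      = measure M {\<omega>\<in>space M. Z \<omega> = z} * measure M {\<omega>\<in>space M. \<omega> \<in> D \<and> X \<omega> \<in> A}" .
qed

lemma event_density_two_strata:
  "u \<noteq> v \<Longrightarrow> event_density M N X (stratum u \<union> stratum v) (\<lambda>x. e u x + e v x)"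
  by (rule event_density_Un[OF finite_measure_axioms X_measurable])
     (auto simp: event_density_stratum)

lemma measure_two_strata:
  "u \<noteq> v \<Longrightarrow> measure M (stratum u \<union> stratum v) = stratum_prob u + stratum_prob v"
  by (subst finite_measure_Union) (auto simp: measure_stratum)

lemma cond_exp_treated_selected:
  assumes "measure M {\<omega>\<in>space M. Z \<omega> \<and> S1 \<omega>} > 0" and "g \<in> borel_measurable N"
  shows "cond_exp_event M {\<omega>\<in>space M. Z \<omega> \<and> S1 \<omega>} (\<lambda>\<omega>. g (X \<omega>))
           = (\<integral>\<omega>. (e ssb (X \<omega>) + e ss (X \<omega>)) * g (X \<omega>) \<partial>M) / (stratum_prob ssb + stratum_prob ss)"
proof -
  have "AE \<omega> in M. S1 \<omega> \<longleftrightarrow> \<omega> \<in> stratum ssb \<union> stratum ss"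
    using AE_space by eventually_elim auto
  then show ?thesis
    using cond_exp_event_cell[OF _ event_density_two_strata, of ssb ss fst True g] assms measure_two_strata[of ssb ss]
    by simp
qed

lemma cond_exp_control_unselected:
  assumes "measure M {\<omega>\<in>space M. \<not> Z \<omega> \<and> \<not> S0 \<omega>} > 0" and "g \<in> borel_measurable N"
  shows "cond_exp_event M {\<omega>\<in>space M. \<not> Z \<omega> \<and> \<not> S0 \<omega>} (\<lambda>\<omega>. g (X \<omega>))
           = (\<integral>\<omega>. (e ssb (X \<omega>) + e sbsb (X \<omega>)) * g (X \<omega>) \<partial>M) / (stratum_prob ssb + stratum_prob sbsb)"
proof -
  have "AE \<omega> in M. \<not> S0 \<omega> \<longleftrightarrow> \<omega> \<in> stratum ssb \<union> stratum sbsb"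
    using AE_space by eventually_elim auto
  then show ?thesis
    using cond_exp_event_cell[OF _ event_density_two_strata, of ssb sbsb "\<lambda>u. \<not> snd u" False g] assms
      measure_two_strata[of ssb sbsb]
    by simp
qed

text \<open>Monotonicity enters only here: it makes {S(1) = 0} and {S(0) = 1} single strata a.s.\<close>

lemma cond_exp_treated_unselected:
  assumes "measure M {\<omega>\<in>space M. Z \<omega> \<and> \<not> S1 \<omega>} > 0" and "g \<in> borel_measurable N"
  shows "cond_exp_event M {\<omega>\<in>space M. Z \<omega> \<and> \<not> S1 \<omega>} (\<lambda>\<omega>. g (X \<omega>))
           = (\<integral>\<omega>. e sbsb (X \<omega>) * g (X \<omega>) \<partial>M) / stratum_prob sbsb"
proof -
  have "AE \<omega> in M. \<not> S1 \<omega> \<longleftrightarrow> \<omega> \<in> stratum sbsb"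
    using monotone AE_space by eventually_elim auto
  then show ?thesis
    using cond_exp_event_cell[OF _ event_density_stratum, of sbsb "\<lambda>u. \<not> fst u" True g] assms
      measure_stratum[of sbsb]
    by simp
qed

lemma cond_exp_control_selected:
  assumes "measure M {\<omega>\<in>space M. \<not> Z \<omega> \<and> S0 \<omega>} > 0" and "g \<in> borel_measurable N"
  shows "cond_exp_event M {\<omega>\<in>space M. \<not> Z \<omega> \<and> S0 \<omega>} (\<lambda>\<omega>. g (X \<omega>))
           = (\<integral>\<omega>. e ss (X \<omega>) * g (X \<omega>) \<partial>M) / stratum_prob ss"
proof -
  have "AE \<omega> in M. S0 \<omega> \<longleftrightarrow> \<omega> \<in> stratum ss"
    using monotone AE_space by eventually_elim auto
  then show ?thesis
    using cond_exp_event_cell[OF _ event_density_stratum, of ss snd False g] assms measure_stratum[of ss]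
    by simp
qed

end

theorem corollary2:
  fixes M :: "'a measure" and N :: "'b measure"
    and Z S1 S0 :: "'a \<Rightarrow> bool" and X :: "'a \<Rightarrow> 'b"
    and e :: "bool \<times> bool \<Rightarrow> 'b \<Rightarrow> real" and h :: "'b \<Rightarrow> real"
  defines "U \<equiv> (\<lambda>\<omega>. (S1 \<omega>, S0 \<omega>))"
    and "S \<equiv> (\<lambda>\<omega>. if Z \<omega> then S1 \<omega> else S0 \<omega>)"
    and "\<pi> \<equiv> stratum_prop M (\<lambda>\<omega>. (S1 \<omega>, S0 \<omega>))"
  assumes P: "prob_space M"
    and Zm: "Z \<in> measurable M (count_space UNIV)"
    and S1m: "S1 \<in> measurable M (count_space UNIV)"
    and S0m: "S0 \<in> measurable M (count_space UNIV)"
    and Xm: "X \<in> measurable M N"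
    and indep: "\<And>z B. B \<in> sets (count_space UNIV \<Otimes>\<^sub>M count_space UNIV \<Otimes>\<^sub>M N) \<Longrightarrow>
              measure M {\<omega>\<in>space M. Z \<omega> = z \<and> (S1 \<omega>, S0 \<omega>, X \<omega>) \<in> B}
              = measure M {\<omega>\<in>space M. Z \<omega> = z} * measure M {\<omega>\<in>space M. (S1 \<omega>, S0 \<omega>, X \<omega>) \<in> B}"
    and mono: "AE \<omega> in M. S0 \<omega> \<longrightarrow> S1 \<omega>"
    and scores: "\<And>u. principal_score M N X U u (e u)"
    and hm: "h \<in> borel_measurable N"
    and hint: "integrable M (\<lambda>\<omega>. h (X \<omega>))"
    and pos_Z1S1: "measure M {\<omega>\<in>space M. Z \<omega> \<and> S \<omega>} > 0"
    and pos_Z1S0: "measure M {\<omega>\<in>space M. Z \<omega> \<and> \<not> S \<omega>} > 0"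
    and pos_Z0S1: "measure M {\<omega>\<in>space M. \<not> Z \<omega> \<and> S \<omega>} > 0"
    and pos_Z0S0: "measure M {\<omega>\<in>space M. \<not> Z \<omega> \<and> \<not> S \<omega>} > 0"
    and pos_ss: "\<pi> ss > 0" and pos_ssb: "\<pi> ssb > 0" and pos_sbsb: "\<pi> sbsb > 0"
    and den1: "AE \<omega> in M. e ssb (X \<omega>) + e ss (X \<omega>) > 0"
    and den0: "AE \<omega> in M. e ssb (X \<omega>) + e sbsb (X \<omega>) > 0"
  shows "(cond_exp_event M {\<omega>\<in>space M. Z \<omega> \<and> S \<omega>} (\<lambda>\<omega>. w1_ssb e \<pi> (X \<omega>) * h (X \<omega>))
           = cond_exp_event M {\<omega>\<in>space M. \<not> Z \<omega> \<and> \<not> S \<omega>} (\<lambda>\<omega>. w0_ssb e \<pi> (X \<omega>) * h (X \<omega>))) \<and>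
         (cond_exp_event M {\<omega>\<in>space M. Z \<omega> \<and> \<not> S \<omega>} (\<lambda>\<omega>. h (X \<omega>))
           = cond_exp_event M {\<omega>\<in>space M. \<not> Z \<omega> \<and> \<not> S \<omega>} (\<lambda>\<omega>. w0_sbsb e \<pi> (X \<omega>) * h (X \<omega>))) \<and>
         (cond_exp_event M {\<omega>\<in>space M. Z \<omega> \<and> S \<omega>} (\<lambda>\<omega>. w1_ss e \<pi> (X \<omega>) * h (X \<omega>))
           = cond_exp_event M {\<omega>\<in>space M. \<not> Z \<omega> \<and> S \<omega>} (\<lambda>\<omega>. h (X \<omega>)))"
proof -
  interpret principal_stratification M N Z S1 S0 X e
    using P Zm S1m S0m Xm indep mono scores unfolding U_def
    by (intro principal_stratification.intro principal_stratification_axioms.intro) auto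
  note [measurable] = hm
  have cells: "{\<omega>\<in>space M. Z \<omega> \<and> S \<omega>} = {\<omega>\<in>space M. Z \<omega> \<and> S1 \<omega>}"
    "{\<omega>\<in>space M. Z \<omega> \<and> \<not> S \<omega>} = {\<omega>\<in>space M. Z \<omega> \<and> \<not> S1 \<omega>}"
    "{\<omega>\<in>space M. \<not> Z \<omega> \<and> S \<omega>} = {\<omega>\<in>space M. \<not> Z \<omega> \<and> S0 \<omega>}"
    "{\<omega>\<in>space M. \<not> Z \<omega> \<and> \<not> S \<omega>} = {\<omega>\<in>space M. \<not> Z \<omega> \<and> \<not> S0 \<omega>}"
    by (auto simp: S_def)
  define T where "T u = (\<integral>\<omega>. e u (X \<omega>) * h (X \<omega>) \<partial>M) / \<pi> u" for u
  have L1: "cond_exp_event M {\<omega>\<in>space M. Z \<omega> \<and> S \<omega>} (\<lambda>\<omega>. w1_ssb e \<pi> (X \<omega>) * h (X \<omega>)) = T ssb"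
    using pos_Z1S1 den1 pos_ss pos_ssb unfolding cells T_def w1_ssb_def \<pi>_def
    by (subst cond_exp_treated_selected; (intro integral_ratio_weight)?; auto)
  have R1: "cond_exp_event M {\<omega>\<in>space M. \<not> Z \<omega> \<and> \<not> S \<omega>} (\<lambda>\<omega>. w0_ssb e \<pi> (X \<omega>) * h (X \<omega>)) = T ssb"
    using pos_Z0S0 den0 pos_ssb pos_sbsb unfolding cells T_def w0_ssb_def \<pi>_def
    by (subst cond_exp_control_unselected; (intro integral_ratio_weight)?; auto)
  have L2: "cond_exp_event M {\<omega>\<in>space M. Z \<omega> \<and> \<not> S \<omega>} (\<lambda>\<omega>. h (X \<omega>)) = T sbsb"
    using pos_Z1S0 unfolding cells T_def \<pi>_def by (intro cond_exp_treated_unselected) auto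
  have R2: "cond_exp_event M {\<omega>\<in>space M. \<not> Z \<omega> \<and> \<not> S \<omega>} (\<lambda>\<omega>. w0_sbsb e \<pi> (X \<omega>) * h (X \<omega>)) = T sbsb"
    using pos_Z0S0 den0 pos_ssb pos_sbsb unfolding cells T_def w0_sbsb_def \<pi>_def
    by (subst cond_exp_control_unselected; (intro integral_ratio_weight)?; auto)
  have L3: "cond_exp_event M {\<omega>\<in>space M. Z \<omega> \<and> S \<omega>} (\<lambda>\<omega>. w1_ss e \<pi> (X \<omega>) * h (X \<omega>)) = T ss"
    using pos_Z1S1 den1 pos_ss pos_ssb unfolding cells T_def w1_ss_def \<pi>_def
    by (subst cond_exp_treated_selected; (intro integral_ratio_weight)?; auto)
  have R3: "cond_exp_event M {\<omega>\<in>space M. \<not> Z \<omega> \<and> S \<omega>} (\<lambda>\<omega>. h (X \<omega>)) = T ss"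
    using pos_Z0S1 unfolding cells T_def \<pi>_def by (intro cond_exp_control_selected) auto
  show ?thesis using L1 R1 L2 R2 L3 R3 by simp
qed

end
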